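(* Let $\mu$ be the Möbius function of the incidence algebra of the decomposition space $\mathbf C$ of layered finite posets, i.e. the convolution inverse of the zeta function $\zeta\equiv 1$ in the algebra of functions on isomorphism classes of finite posets with the convolution product described below. Then for every finite poset $P$, \[ \mu(P)=\begin{cases}(-1)^n & \text{if $P$ is a discrete poset (no two distinct elements comparable) with $n$ elements},\\ 0 & \text{otherwise.}\end{cases} \]
   Context: For $n\ge 0$ let $\underline n=\{1,\dots,n\}$ (with $\underline 0=\emptyset$). An $n$-layered finite poset is a finite poset $P$ with a monotone map $l:P\to\underline n$; its layers $P_i=l^{-1}(i)$ may be empty. The groupoid $\mathbf C_n$ has these as objects and poset isomorphisms commuting with the layerings as morphisms; these assemble into a simplicial groupoid $\mathbf C$ (inner face maps join adjacent layers, outer face maps delete the first/last layer, degeneracies insert empty layers), which is a decomposition space; $\mathbf C_1$ is the groupoid of finite posets. Taking homotopy cardinality of its incidence coalgebra, the incidence algebra of $\mathbf C$ is the $\mathbb Q$-vector space of functions $\varphi$ from isomorphism classes of finite posets to $\mathbb Q$ with convolution \[(\varphi*\psi)(P)=\sum_{l:P\to \underline 2\ \text{monotone}}\varphi(l^{-1}(1))\,\psi(l^{-1}(2)),\] where $l^{-1}(1),l^{-1}(2)$ carry the induced orders; the unit is $\delta(P)=1$ if $P=\emptyset$ and $0$ otherwise. The zeta function is $\zeta(P)=1$ for all $P$, and the Möbius function $\mu$ is its convolution inverse. *)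

theory Defs
  imports Complex_Main "HOL-Library.FuncSet"
begin

definition fin_poset :: "'a set \<Rightarrow> ('a \<Rightarrow> 'a \<Rightarrow> bool) \<Rightarrow> bool" where
  "fin_poset A le \<longleftrightarrow> finite A
     \<and> (\<forall>x y. le x y \<longrightarrow> x \<in> A \<and> y \<in> A)
     \<and> (\<forall>x\<in>A. le x x)
     \<and> (\<forall>x\<in>A. \<forall>y\<in>A. le x y \<and> le y x \<longrightarrow> x = y)
     \<and> (\<forall>x\<in>A. \<forall>y\<in>A. \<forall>z\<in>A. le x y \<and> le y z \<longrightarrow> le x z)"

definition induced :: "('a \<Rightarrow> 'a \<Rightarrow> bool) \<Rightarrow> 'a set \<Rightarrow> 'a \<Rightarrow> 'a \<Rightarrow> bool" where
  "induced le B = (\<lambda>x y. x \<in> B \<and> y \<in> B \<and> le x y)"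

definition mono_layerings :: "'a set \<Rightarrow> ('a \<Rightarrow> 'a \<Rightarrow> bool) \<Rightarrow> ('a \<Rightarrow> nat) set" where
  "mono_layerings A le =
     {l \<in> A \<rightarrow>\<^sub>E {1, 2}. \<forall>x\<in>A. \<forall>y\<in>A. le x y \<longrightarrow> l x \<le> l y}"

definition conv ::
  "('a set \<Rightarrow> ('a \<Rightarrow> 'a \<Rightarrow> bool) \<Rightarrow> rat) \<Rightarrow> ('a set \<Rightarrow> ('a \<Rightarrow> 'a \<Rightarrow> bool) \<Rightarrow> rat)
    \<Rightarrow> 'a set \<Rightarrow> ('a \<Rightarrow> 'a \<Rightarrow> bool) \<Rightarrow> rat" where
  "conv \<phi> \<psi> A le =
     (\<Sum>l\<in>mono_layerings A le.
        \<phi> {x\<in>A. l x = 1} (induced le {x\<in>A. l x = 1})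
      * \<psi> {x\<in>A. l x = 2} (induced le {x\<in>A. l x = 2}))"

definition zeta :: "'a set \<Rightarrow> ('a \<Rightarrow> 'a \<Rightarrow> bool) \<Rightarrow> rat" where
  "zeta A le = 1"

definition delta :: "'a set \<Rightarrow> ('a \<Rightarrow> 'a \<Rightarrow> bool) \<Rightarrow> rat" where
  "delta A le = (if A = {} then 1 else 0)"

definition is_moebius :: "('a set \<Rightarrow> ('a \<Rightarrow> 'a \<Rightarrow> bool) \<Rightarrow> rat) \<Rightarrow> bool" where
  "is_moebius \<mu> \<longleftrightarrow> (\<forall>A le. fin_poset A le \<longrightarrow>
       conv \<mu> zeta A le = delta A le \<and> conv zeta \<mu> A le = delta A le)"

definition discrete_poset :: "'a set \<Rightarrow> ('a \<Rightarrow> 'a \<Rightarrow> bool) \<Rightarrow> bool" where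
  "discrete_poset A le \<longleftrightarrow> (\<forall>x\<in>A. \<forall>y\<in>A. le x y \<longrightarrow> x = y)"

end

theory Submission
  imports Defs
begin

text \<open>Right convolution with \<open>\<zeta>\<close> sums a function over the down-sets of \<open>P\<close> (the first
  layers of the monotone maps \<open>P \<rightarrow> 2\<close>), and \<open>P\<close> is one of them; so by induction on \<open>|P|\<close>
  a function is determined by its right convolution with \<open>\<zeta>\<close>, and it suffices that the
  claimed formula convolves to \<open>\<delta>\<close>. In that sum only the discrete down-sets contribute;
  these are exactly the subsets \<open>S\<close> of the set \<open>M\<close> of minimal elements, and the sum of
  \<open>(-1)^|S|\<close> over them vanishes unless \<open>M\<close>, and hence \<open>P\<close>, is empty.\<close>

definition down_sets :: "'a set \<Rightarrow> ('a \<Rightarrow> 'a \<Rightarrow> bool) \<Rightarrow> 'a set set" where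
  "down_sets A le = {D. D \<subseteq> A \<and> (\<forall>x\<in>A. \<forall>y\<in>D. le x y \<longrightarrow> x \<in> D)}"

definition minimal_elements :: "'a set \<Rightarrow> ('a \<Rightarrow> 'a \<Rightarrow> bool) \<Rightarrow> 'a set" where
  "minimal_elements A le = {m\<in>A. \<forall>x\<in>A. le x m \<longrightarrow> x = m}"

definition discrete_sign :: "'a set \<Rightarrow> ('a \<Rightarrow> 'a \<Rightarrow> bool) \<Rightarrow> rat" where
  "discrete_sign A le = (if discrete_poset A le then (-1) ^ card A else 0)"

lemma sum_Pow_minus_one_power_card:
  assumes "finite A"
  shows "(\<Sum>X\<in>Pow A. (-1::'b::comm_ring_1) ^ card X) = (if A = {} then 1 else 0)"
  using prod_diff_conv_sum[OF assms, of "\<lambda>_. 1::'b" "\<lambda>_. 1"] assms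
  by (simp add: power_0_left)

lemma induced_self: "fin_poset A le \<Longrightarrow> induced le A = le"
  unfolding fin_poset_def induced_def by (intro ext) blast

lemma fin_poset_induced:
  assumes "fin_poset A le" "B \<subseteq> A"
  shows "fin_poset B (induced le B)"
proof -
  have "finite A" "\<forall>x\<in>A. le x x"
      "\<forall>x\<in>A. \<forall>y\<in>A. le x y \<and> le y x \<longrightarrow> x = y"
      "\<forall>x\<in>A. \<forall>y\<in>A. \<forall>z\<in>A. le x y \<and> le y z \<longrightarrow> le x z"
    using assms(1) unfolding fin_poset_def by blast+
  then show ?thesis
    using assms(2) finite_subset unfolding fin_poset_def induced_def by blast
qed

lemma minimal_elements_eq_empty_iff:
  assumes "fin_poset A le"
  shows "minimal_elements A le = {} \<longleftrightarrow> A = {}"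
proof -
  have "minimal_elements A le \<noteq> {}" if "A \<noteq> {}"
  proof -
    let ?less = "\<lambda>x y. le x y \<and> x \<noteq> y"
    have "finite A" "asymp_on A ?less" "transp_on A ?less"
      using assms unfolding fin_poset_def asymp_on_def transp_on_def by blast+
    then obtain m where "m \<in> A" "\<forall>x\<in>A. x \<noteq> m \<longrightarrow> \<not> ?less x m"
      using Finite_Set.bex_min_element \<open>A \<noteq> {}\<close> by blast
    then have "m \<in> minimal_elements A le"
      unfolding minimal_elements_def by blast
    then show ?thesis by blast
  qed
  then show ?thesis unfolding minimal_elements_def by blast
qed

lemma bij_betw_mono_layerings_down_sets:
  "bij_betw (\<lambda>l. {x\<in>A. l x = 1}) (mono_layerings A le) (down_sets A le)"
proof (rule bij_betwI[where g = "\<lambda>D. \<lambda>x\<in>A. if x \<in> D then 1 else 2::nat"])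
  show "(\<lambda>l. {x\<in>A. l x = 1}) \<in> mono_layerings A le \<rightarrow> down_sets A le"
  proof
    fix l assume "l \<in> mono_layerings A le"
    then have "l \<in> A \<rightarrow> {1, 2}" "\<forall>x\<in>A. \<forall>y\<in>A. le x y \<longrightarrow> l x \<le> l y"
      unfolding mono_layerings_def by auto
    then show "{x\<in>A. l x = 1} \<in> down_sets A le"
      unfolding down_sets_def by (fastforce simp: Pi_iff)
  qed
  show "(\<lambda>D. \<lambda>x\<in>A. if x \<in> D then 1 else 2::nat) \<in> down_sets A le \<rightarrow> mono_layerings A le"
    unfolding down_sets_def mono_layerings_def by fastforce
  show "(\<lambda>x\<in>A. if x \<in> {x\<in>A. l x = 1} then 1 else 2) = l" if "l \<in> mono_layerings A le" for l
    using that unfolding mono_layerings_def by (fastforce simp: PiE_iff extensional_def)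
  show "{x\<in>A. (\<lambda>x\<in>A. if x \<in> D then 1 else 2::nat) x = 1} = D" if "D \<in> down_sets A le" for D
    using that unfolding down_sets_def by auto
qed

lemma conv_zeta_eq_sum_down_sets:
  "conv \<phi> zeta A le = (\<Sum>D\<in>down_sets A le. \<phi> D (induced le D))"
  using sum.reindex_bij_betw[OF bij_betw_mono_layerings_down_sets, of "\<lambda>D. \<phi> D (induced le D)"]
  by (simp add: conv_def zeta_def)

lemma finite_down_sets: "finite A \<Longrightarrow> finite (down_sets A le)"
  unfolding down_sets_def by (auto intro: finite_subset[of _ "Pow A"])

lemma conv_zeta_eq_self_plus_proper_down_sets:
  assumes "fin_poset A le"
  shows "conv \<phi> zeta A le = \<phi> A le + (\<Sum>D\<in>down_sets A le - {A}. \<phi> D (induced le D))"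
proof -
  have "finite (down_sets A le)"
    using assms finite_down_sets unfolding fin_poset_def by blast
  moreover have "A \<in> down_sets A le"
    unfolding down_sets_def by blast
  ultimately show ?thesis
    by (simp add: conv_zeta_eq_sum_down_sets sum.remove induced_self[OF assms])
qed

lemma conv_zeta_right_cancel:
  assumes "\<And>B le'. fin_poset B le' \<Longrightarrow> conv \<phi> zeta B le' = conv \<psi> zeta B le'"
    and "fin_poset A le"
  shows "\<phi> A le = \<psi> A le"
  using assms(2)
proof (induction "card A" arbitrary: A le rule: less_induct)
  case less
  have "\<phi> D (induced le D) = \<psi> D (induced le D)" if "D \<in> down_sets A le - {A}" for D
  proof (rule less.hyps)
    have "D \<subset> A" using that unfolding down_sets_def by auto
    then show "card D < card A"
      using less.prems unfolding fin_poset_def by (auto intro: psubset_card_mono)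
    show "fin_poset D (induced le D)"
      using \<open>D \<subset> A\<close> less.prems by (simp add: fin_poset_induced)
  qed
  then show ?case
    using assms(1)[OF less.prems]
    by (simp add: conv_zeta_eq_self_plus_proper_down_sets[OF less.prems])
qed

lemma discrete_down_sets_eq_Pow_minimal_elements:
  "{D\<in>down_sets A le. discrete_poset D (induced le D)} = Pow (minimal_elements A le)"
  unfolding down_sets_def discrete_poset_def induced_def minimal_elements_def by blast

lemma conv_discrete_sign_zeta:
  assumes "fin_poset A le"
  shows "conv discrete_sign zeta A le = delta A le"
proof -
  have "finite A" using assms unfolding fin_poset_def by simp
  have "conv discrete_sign zeta A le
      = (\<Sum>D\<in>down_sets A le. if discrete_poset D (induced le D) then (-1) ^ card D else 0)"
    by (simp add: conv_zeta_eq_sum_down_sets discrete_sign_def)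
  also have "\<dots> = (\<Sum>D\<in>{D\<in>down_sets A le. discrete_poset D (induced le D)}. (-1) ^ card D)"
    using \<open>finite A\<close> by (simp add: sum.inter_filter finite_down_sets)
  also have "\<dots> = (\<Sum>S\<in>Pow (minimal_elements A le). (-1) ^ card S)"
    by (simp only: discrete_down_sets_eq_Pow_minimal_elements)
  also have "\<dots> = delta A le"
    using \<open>finite A\<close> minimal_elements_eq_empty_iff[OF assms]
    by (simp add: sum_Pow_minus_one_power_card minimal_elements_def delta_def)
  finally show ?thesis .
qed

theorem theorem3p4:
  fixes \<mu> :: "'a set \<Rightarrow> ('a \<Rightarrow> 'a \<Rightarrow> bool) \<Rightarrow> rat"
    and A :: "'a set" and le :: "'a \<Rightarrow> 'a \<Rightarrow> bool"
  assumes "is_moebius \<mu>"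
    and "fin_poset A le"
  shows "\<mu> A le = (if discrete_poset A le then (-1) ^ card A else 0)"
proof -
  have "conv \<mu> zeta B le' = conv discrete_sign zeta B le'" if "fin_poset B le'" for B le'
    using assms(1) that by (simp add: is_moebius_def conv_discrete_sign_zeta)
  then have "\<mu> A le = discrete_sign A le"
    using assms(2) by (rule conv_zeta_right_cancel)
  then show ?thesis unfolding discrete_sign_def .
qed

end
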